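(* Let $n\ge1$, $L>0$, $D\subseteq\mathbb{R}$ compact, and consider an $n$-qubit system with dynamics $\rho_k=T(u_k)\rho_{k-1}$ and output $\bar y_k=h(\rho_k)$, where $h(\rho)$ is a real polynomial (of some degree $R$, with constant term) in the variables $\langle Z^{(i)}\rangle={\rm Tr}(\rho Z^{(i)})$, $i=1,\dots,n$. Suppose that (i) there is $0<\epsilon\le1$ with $\sup_{A\in H_0(2^n),A\ne0}\|T(x)A\|_2/\|A\|_2\le1-\epsilon$ for all $x\in D\cap[-L,L]$, and (ii) $T$ is continuous in the sense that for every $\epsilon'>0$ there is $\delta_T(\epsilon')>0$ with $\|T(x)-T(y)\|_{2-2}<\epsilon'$ whenever $x,y\in D\cap[-L,L]$ and $|x-y|<\delta_T(\epsilon')$. Then for any null sequence $w$, the induced filter $M^T$ and its corresponding functional $F^T$ are $w$-fading memory.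
   Context: $T(x)$, $x\in D\cap[-L,L]$, are CPTP maps on $2^n\times 2^n$ complex matrices; $H_0(2^n)$ is the space of traceless Hermitian $2^n\times2^n$ matrices; $\|\cdot\|_2$ is the Schatten 2-norm and $\|S\|_{2-2}=\sup_{\|A\|_2=1}\|SA\|_2$ over all complex $2^n\times2^n$ matrices $A$. $Z^{(i)}$ is the Pauli $Z$ operator acting on qubit $i$. $K_L(D)$: real sequences $\{u_k\}_{k\in\mathbb{Z}}$ with values in $D\cap[-L,L]$; $K_L^-(D)$: same indexed by $\mathbb{Z}^-=\{\dots,-1,0\}$. The induced filter is $M^T(u)_k=h\big(\lim_{N\to\infty}T(u_k)\cdots T(u_{k-N})\rho_{-N}\big)$ (the limit exists and is independent of the density operators $\rho_{-N}$ under (i)); its functional is $F^T(u_-)=M^T(u)_0$ for any $u$ extending $u_-\in K_L^-(D)$. A null sequence is a decreasing $w:\{0,1,\dots\}\to(0,1]$ with $w_k\to0$; $\|u\|_w=\sup_{k\le0}|u_k|w_{-k}$. A time-invariant causal filter is $w$-fading memory iff its functional is continuous on $(K_L^-(D),\|\cdot\|_w)$. *)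

theory Defs
  imports "HOL-Analysis.Analysis"
begin

text \<open>Complex square matrices of size N are represented as functions
  nat => nat => complex that vanish outside the index block [0,N) x [0,N).\<close>

type_synonym cmat = "nat \<Rightarrow> nat \<Rightarrow> complex"

definition sq_mat :: "nat \<Rightarrow> cmat \<Rightarrow> bool" where
  "sq_mat N A \<longleftrightarrow> (\<forall>i j. \<not> (i < N \<and> j < N) \<longrightarrow> A i j = 0)"

definition mtrace :: "nat \<Rightarrow> cmat \<Rightarrow> complex" where
  "mtrace N A = (\<Sum>i<N. A i i)"

definition mmult :: "nat \<Rightarrow> cmat \<Rightarrow> cmat \<Rightarrow> cmat" where
  "mmult N A B = (\<lambda>i j. if i < N \<and> j < N then (\<Sum>k<N. A i k * B k j) else 0)"

definition madj :: "cmat \<Rightarrow> cmat" where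
  "madj A = (\<lambda>i j. cnj (A j i))"

definition hermitian :: "nat \<Rightarrow> cmat \<Rightarrow> bool" where
  "hermitian N A \<longleftrightarrow> sq_mat N A \<and> madj A = A"

definition psd :: "nat \<Rightarrow> cmat \<Rightarrow> bool" where
  "psd N A \<longleftrightarrow> hermitian N A \<and>
     (\<forall>v :: nat \<Rightarrow> complex. 0 \<le> Re (\<Sum>i<N. \<Sum>j<N. cnj (v i) * A i j * v j))"

definition density :: "nat \<Rightarrow> cmat \<Rightarrow> bool" where
  "density N \<rho> \<longleftrightarrow> psd N \<rho> \<and> mtrace N \<rho> = 1"

definition hs_norm :: "nat \<Rightarrow> cmat \<Rightarrow> real" where
  "hs_norm N A = sqrt (\<Sum>i<N. \<Sum>j<N. (cmod (A i j))\<^sup>2)"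

definition op22 :: "nat \<Rightarrow> (cmat \<Rightarrow> cmat) \<Rightarrow> real" where
  "op22 N S = Sup {hs_norm N (S A) | A. sq_mat N A \<and> hs_norm N A = 1}"

text \<open>(id_k tensor Phi) applied to a kN x kN matrix viewed as a k x k block
  matrix of N x N blocks.\<close>
definition block_apply :: "nat \<Rightarrow> nat \<Rightarrow> (cmat \<Rightarrow> cmat) \<Rightarrow> cmat \<Rightarrow> cmat" where
  "block_apply N k \<Phi> X = (\<lambda>i j. if i < k * N \<and> j < k * N then
      \<Phi> (\<lambda>p q. if p < N \<and> q < N then X ((i div N) * N + p) ((j div N) * N + q) else 0)
        (i mod N) (j mod N)
    else 0)"

definition cptp :: "nat \<Rightarrow> (cmat \<Rightarrow> cmat) \<Rightarrow> bool" where
  "cptp N \<Phi> \<longleftrightarrow>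
     (\<forall>A. sq_mat N A \<longrightarrow> sq_mat N (\<Phi> A)) \<and>
     (\<forall>A B. sq_mat N A \<longrightarrow> sq_mat N B \<longrightarrow>
        \<Phi> (\<lambda>i j. A i j + B i j) = (\<lambda>i j. \<Phi> A i j + \<Phi> B i j)) \<and>
     (\<forall>c A. sq_mat N A \<longrightarrow> \<Phi> (\<lambda>i j. c * A i j) = (\<lambda>i j. c * \<Phi> A i j)) \<and>
     (\<forall>A. sq_mat N A \<longrightarrow> mtrace N (\<Phi> A) = mtrace N A) \<and>
     (\<forall>k X. psd (k * N) X \<longrightarrow> psd (k * N) (block_apply N k \<Phi> X))"

text \<open>Pauli Z on qubit i (1 <= i <= n) of an n-qubit system; basis index j,
  qubit 1 is the most significant bit.\<close>
definition pauliZ :: "nat \<Rightarrow> nat \<Rightarrow> cmat" where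
  "pauliZ n i = (\<lambda>j l. if j < 2 ^ n \<and> l < 2 ^ n \<and> j = l
      then (if bit j (n - i) then -1 else 1) else 0)"

definition expZ :: "nat \<Rightarrow> cmat \<Rightarrow> nat \<Rightarrow> real" where
  "expZ n \<rho> i = Re (mtrace (2 ^ n) (mmult (2 ^ n) \<rho> (pauliZ n i)))"

definition monomials_upto :: "nat \<Rightarrow> nat \<Rightarrow> (nat \<Rightarrow> nat) set" where
  "monomials_upto n R = {\<alpha>. (\<forall>i. i \<notin> {1..n} \<longrightarrow> \<alpha> i = 0) \<and> sum \<alpha> {1..n} \<le> R}"

definition hpoly :: "nat \<Rightarrow> nat \<Rightarrow> ((nat \<Rightarrow> nat) \<Rightarrow> real) \<Rightarrow> cmat \<Rightarrow> real" where
  "hpoly n R c \<rho> = (\<Sum>\<alpha>\<in>monomials_upto n R. c \<alpha> * (\<Prod>i\<in>{1..n}. expZ n \<rho> i ^ \<alpha> i))"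

text \<open>T(u_k) T(u_{k-1}) ... T(u_{k-m}) rho.\<close>
fun propagate :: "(real \<Rightarrow> cmat \<Rightarrow> cmat) \<Rightarrow> (int \<Rightarrow> real) \<Rightarrow> int \<Rightarrow> nat \<Rightarrow> cmat \<Rightarrow> cmat" where
  "propagate T u k 0 \<rho> = T (u k) \<rho>"
| "propagate T u k (Suc m) \<rho> = propagate T u k m (T (u (k - int (Suc m))) \<rho>)"

definition mat_lim :: "nat \<Rightarrow> (nat \<Rightarrow> cmat) \<Rightarrow> cmat \<Rightarrow> bool" where
  "mat_lim N S \<sigma> \<longleftrightarrow> (\<forall>i<N. \<forall>j<N. (\<lambda>m. S m i j) \<longlonglongrightarrow> \<sigma> i j)"

definition limit_state :: "nat \<Rightarrow> (real \<Rightarrow> cmat \<Rightarrow> cmat) \<Rightarrow> (int \<Rightarrow> real) \<Rightarrow> int \<Rightarrow> cmat" where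
  "limit_state N T u k = (THE \<sigma>. sq_mat N \<sigma> \<and>
     (\<forall>\<rho>s. (\<forall>m. density N (\<rho>s m)) \<longrightarrow> mat_lim N (\<lambda>m. propagate T u k m (\<rho>s m)) \<sigma>))"

definition filterM :: "nat \<Rightarrow> nat \<Rightarrow> ((nat \<Rightarrow> nat) \<Rightarrow> real) \<Rightarrow> (real \<Rightarrow> cmat \<Rightarrow> cmat)
    \<Rightarrow> (int \<Rightarrow> real) \<Rightarrow> int \<Rightarrow> real" where
  "filterM n R c T u k = hpoly n R c (limit_state (2 ^ n) T u k)"

definition functionalF :: "nat \<Rightarrow> nat \<Rightarrow> ((nat \<Rightarrow> nat) \<Rightarrow> real) \<Rightarrow> (real \<Rightarrow> cmat \<Rightarrow> cmat)
    \<Rightarrow> (int \<Rightarrow> real) \<Rightarrow> real" where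
  "functionalF n R c T u = filterM n R c T u 0"

text \<open>K_L^-(D): left-infinite sequences indexed by k <= 0 (set to 0 for k > 0).\<close>
definition KLminus :: "real \<Rightarrow> real set \<Rightarrow> (int \<Rightarrow> real) set" where
  "KLminus L D = {u. (\<forall>k\<le>0. u k \<in> D \<inter> {-L..L}) \<and> (\<forall>k>0. u k = 0)}"

definition null_sequence :: "(nat \<Rightarrow> real) \<Rightarrow> bool" where
  "null_sequence w \<longleftrightarrow> decseq w \<and> (\<forall>k. 0 < w k \<and> w k \<le> 1) \<and> w \<longlonglongrightarrow> 0"

definition wnorm :: "(nat \<Rightarrow> real) \<Rightarrow> (int \<Rightarrow> real) \<Rightarrow> real" where
  "wnorm w u = (SUP k\<in>{..0::int}. \<bar>u k\<bar> * w (nat (- k)))"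

definition w_fading_memory :: "(nat \<Rightarrow> real) \<Rightarrow> real \<Rightarrow> real set \<Rightarrow> ((int \<Rightarrow> real) \<Rightarrow> real) \<Rightarrow> bool" where
  "w_fading_memory w L D F \<longleftrightarrow>
     (\<forall>u\<in>KLminus L D. \<forall>e>0. \<exists>d>0. \<forall>v\<in>KLminus L D.
        wnorm w (\<lambda>k. u k - v k) < d \<longrightarrow> \<bar>F u - F v\<bar> < e)"

end

theory Submission
  imports Defs
begin

text \<open>Write \<open>q = 1 - \<epsilon>\<close> and \<open>N = 2^n\<close>. The difference of two density matrices is traceless
  Hermitian, so by (i) every channel \<open>T x\<close> shrinks the Hilbert--Schmidt distance of density
  matrices by the factor \<open>q\<close>. Hence the backward iterates \<open>T(u\<^sub>0) \<dots> T(u\<^sub>-\<^sub>m) \<rho>\<close> form a Cauchy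
  sequence whose limit does not depend on the initial states, and everything that happened more
  than \<open>M\<close> steps ago influences this limit by at most \<open>2 N q\<^sup>M\<^sup>+\<^sup>1\<close>. If two inputs are close in
  the weighted norm, they are uniformly close on the last \<open>M\<close> steps, so by (ii) the last \<open>M\<close>
  channels differ by some small \<open>\<epsilon>'\<close> in operator norm; the resulting errors add up to at most
  \<open>N \<epsilon>' / (1 - q)\<close>. Finally, the output is a polynomial in the entries of the limit state.\<close>

section \<open>Matrices and the Hilbert--Schmidt norm\<close>

lemma hs_norm_L2_set: "hs_norm N A = L2_set (\<lambda>p. cmod (A (fst p) (snd p))) ({..<N} \<times> {..<N})"
  unfolding hs_norm_def L2_set_def by (simp add: sum.cartesian_product case_prod_beta)

lemma hs_norm_nonneg: "0 \<le> hs_norm N A"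
  unfolding hs_norm_def by (simp add: sum_nonneg)

lemma hs_norm_zero [simp]: "hs_norm N (\<lambda>i j. 0) = 0"
  unfolding hs_norm_def by simp

lemma norm_entry_le_hs_norm: "i < N \<Longrightarrow> j < N \<Longrightarrow> cmod (A i j) \<le> hs_norm N A"
  unfolding hs_norm_L2_set
  using member_le_L2_set[of "{..<N} \<times> {..<N}" "(i, j)" "\<lambda>p. cmod (A (fst p) (snd p))"] by simp

lemma hs_norm_triangle: "hs_norm N (\<lambda>i j. A i j + B i j) \<le> hs_norm N A + hs_norm N B"
proof -
  have "hs_norm N (\<lambda>i j. A i j + B i j)
      \<le> L2_set (\<lambda>p. cmod (A (fst p) (snd p)) + cmod (B (fst p) (snd p))) ({..<N} \<times> {..<N})"
    unfolding hs_norm_L2_set by (rule L2_set_mono) (auto intro: norm_triangle_ineq)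
  also have "\<dots> \<le> hs_norm N A + hs_norm N B"
    unfolding hs_norm_L2_set by (rule L2_set_triangle_ineq)
  finally show ?thesis .
qed

lemma hs_norm_mult_left: "hs_norm N (\<lambda>i j. c * A i j) = cmod c * hs_norm N A"
  unfolding hs_norm_L2_set by (simp add: L2_set_right_distrib norm_mult)

lemma hs_norm_diff_triangle:
  "hs_norm N (\<lambda>i j. A i j - C i j) \<le> hs_norm N (\<lambda>i j. A i j - B i j) + hs_norm N (\<lambda>i j. B i j - C i j)"
  using hs_norm_triangle[of N "\<lambda>i j. A i j - B i j" "\<lambda>i j. B i j - C i j"] by simp

lemma hs_norm_diff_le: "hs_norm N (\<lambda>i j. A i j - B i j) \<le> hs_norm N A + hs_norm N B"
  using hs_norm_triangle[of N A "\<lambda>i j. (-1) * B i j"] hs_norm_mult_left[of N "-1" B] by simp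

lemma hs_norm_sum_le: "hs_norm N (\<lambda>i j. \<Sum>p\<in>P. M p i j) \<le> (\<Sum>p\<in>P. hs_norm N (M p))"
proof (induction P rule: infinite_finite_induct)
  case (insert p P)
  have "hs_norm N (\<lambda>i j. \<Sum>p\<in>insert p P. M p i j)
      = hs_norm N (\<lambda>i j. M p i j + (\<lambda>i j. \<Sum>p\<in>P. M p i j) i j)"
    using insert by simp
  also have "\<dots> \<le> hs_norm N (M p) + hs_norm N (\<lambda>i j. \<Sum>p\<in>P. M p i j)"
    by (rule hs_norm_triangle)
  finally show ?case
    using insert by simp
qed simp_all

lemma hs_norm_pos: "sq_mat N A \<Longrightarrow> A \<noteq> (\<lambda>i j. 0) \<Longrightarrow> 0 < hs_norm N A"
proof -
  assume sq: "sq_mat N A" and "A \<noteq> (\<lambda>i j. 0)"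
  then obtain i j where "A i j \<noteq> 0"
    by (meson ext)
  moreover from this sq have "i < N" "j < N"
    unfolding sq_mat_def by blast+
  ultimately show ?thesis
    using norm_entry_le_hs_norm[of i N j A] zero_less_norm_iff[of "A i j"] by linarith
qed

lemma sq_mat_zero: "sq_mat N (\<lambda>i j. 0)"
  unfolding sq_mat_def by simp

lemma sq_mat_mult_left: "sq_mat N A \<Longrightarrow> sq_mat N (\<lambda>i j. c * A i j)"
  unfolding sq_mat_def by simp

lemma sq_mat_diff: "sq_mat N A \<Longrightarrow> sq_mat N B \<Longrightarrow> sq_mat N (\<lambda>i j. A i j - B i j)"
  unfolding sq_mat_def by simp

lemma sq_mat_sum: "(\<And>p. p \<in> P \<Longrightarrow> sq_mat N (M p)) \<Longrightarrow> sq_mat N (\<lambda>i j. \<Sum>p\<in>P. M p i j)"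
  unfolding sq_mat_def by (simp add: sum.neutral)

definition mat_unit :: "nat \<times> nat \<Rightarrow> cmat" where
  "mat_unit p = (\<lambda>i j. if i = fst p \<and> j = snd p then 1 else 0)"

lemma sq_mat_mat_unit: "p \<in> {..<N} \<times> {..<N} \<Longrightarrow> sq_mat N (mat_unit p)"
  unfolding sq_mat_def mat_unit_def by auto

lemma sq_mat_expansion:
  "sq_mat N A \<Longrightarrow> A = (\<lambda>i j. \<Sum>p\<in>{..<N} \<times> {..<N}. A (fst p) (snd p) * mat_unit p i j)"
proof (intro ext)
  fix i j assume "sq_mat N A"
  then have "(\<Sum>p\<in>{..<N} \<times> {..<N}. if p = (i, j) then A i j else 0) = A i j"
    unfolding sq_mat_def by auto
  moreover have "A (fst p) (snd p) * mat_unit p i j = (if p = (i, j) then A i j else 0)" for p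
    by (auto simp: mat_unit_def)
  ultimately show "A i j = (\<Sum>p\<in>{..<N} \<times> {..<N}. A (fst p) (snd p) * mat_unit p i j)"
    by simp
qed

section \<open>Density matrices\<close>

lemma density_sq_mat: "density N \<rho> \<Longrightarrow> sq_mat N \<rho>"
  unfolding density_def psd_def hermitian_def by blast

lemma density_cnj_entry: "density N \<rho> \<Longrightarrow> cnj (\<rho> i j) = \<rho> j i"
proof -
  assume "density N \<rho>"
  then have "madj \<rho> j i = \<rho> j i"
    unfolding density_def psd_def hermitian_def by simp
  then show ?thesis
    unfolding madj_def by simp
qed

lemma density_quadratic_form_nonneg:
  "density N \<rho> \<Longrightarrow> 0 \<le> Re (\<Sum>i<N. \<Sum>j<N. cnj (v i) * \<rho> i j * v j)"
  unfolding density_def psd_def by blast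

lemma quadratic_form_one_point:
  fixes A :: cmat
  assumes "i < N"
  shows "(\<Sum>a<N. \<Sum>b<N. cnj (if a = i then 1 else 0) * A a b * (if b = i then 1 else 0)) = A i i"
  using assms
  by (simp add: if_distrib[where f = cnj] if_distrib[where f = "\<lambda>x. _ * x"]
      if_distrib[where f = "\<lambda>x. x * _"] cong: if_cong)

lemma sum_two_point:
  fixes g :: "nat \<Rightarrow> 'a::comm_ring_1"
  assumes "i < N" "j < N" "i \<noteq> j"
  shows "(\<Sum>b<N. g b * (if b = i then x else if b = j then y else 0)) = g i * x + g j * y"
proof -
  have "(\<Sum>b<N. g b * (if b = i then x else if b = j then y else 0))
      = (\<Sum>b<N. (if b = i then g i * x else 0) + (if b = j then g j * y else 0))"
    by (rule sum.cong) (use assms in auto)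
  then show ?thesis
    using assms by (simp add: sum.distrib)
qed

lemma quadratic_form_two_point:
  fixes A :: cmat and z :: complex
  assumes "i < N" "j < N" "i \<noteq> j"
  defines "v \<equiv> \<lambda>k. if k = i then 1 else if k = j then z else 0"
  shows "(\<Sum>a<N. \<Sum>b<N. cnj (v a) * A a b * v b) = A i i + A i j * z + cnj z * (A j i + A j j * z)"
proof -
  have "(\<Sum>b<N. cnj (v a) * A a b * v b) = cnj (v a) * (A a i + A a j * z)" for a
  proof -
    have "(\<Sum>b<N. A a b * v b) = A a i + A a j * z"
      unfolding v_def using sum_two_point[OF assms(1-3), of "A a" 1 z] by simp
    then show ?thesis
      by (simp only: mult.assoc flip: sum_distrib_left)
  qed
  then have "(\<Sum>a<N. \<Sum>b<N. cnj (v a) * A a b * v b) = (\<Sum>a<N. (A a i + A a j * z) * cnj (v a))"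
    by (simp add: mult.commute)
  also have "\<dots> = A i i + A i j * z + cnj z * (A j i + A j j * z)"
    using sum_two_point[OF assms(1-3), of "\<lambda>a. A a i + A a j * z" 1 "cnj z"]
    by (simp add: v_def if_distrib[where f = cnj] cong: if_cong)
  finally show ?thesis .
qed

lemma density_diag_nonneg: "density N \<rho> \<Longrightarrow> i < N \<Longrightarrow> 0 \<le> Re (\<rho> i i)"
  using density_quadratic_form_nonneg[of N \<rho> "\<lambda>k. if k = i then 1 else 0"]
    quadratic_form_one_point[of i N \<rho>]
  by simp

lemma density_diag_le_one:
  assumes d: "density N \<rho>" and i: "i < N"
  shows "Re (\<rho> i i) \<le> 1"
proof -
  have "(\<Sum>k<N. Re (\<rho> k k)) = Re (mtrace N \<rho>)"
    by (simp add: mtrace_def Re_sum)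
  also have "\<dots> = 1"
    using d by (simp add: density_def)
  finally have "(\<Sum>k<N. Re (\<rho> k k)) = 1" .
  moreover have "Re (\<rho> i i) \<le> (\<Sum>k<N. Re (\<rho> k k))"
    by (rule member_le_sum) (use i density_diag_nonneg[OF d] in auto)
  ultimately show ?thesis
    by simp
qed

lemma density_offdiag_le:
  assumes d: "density N \<rho>" and i: "i < N" and j: "j < N" and ij: "i \<noteq> j"
  shows "2 * cmod (\<rho> i j) \<le> Re (\<rho> i i) + Re (\<rho> j j)"
proof (cases "\<rho> i j = 0")
  case True
  then show ?thesis
    using density_diag_nonneg[OF d i] density_diag_nonneg[OF d j] by simp
next
  case False
  define a where "a = \<rho> i j"
  \<comment> \<open>the test vector \<open>e\<^sub>i + z e\<^sub>j\<close> with \<open>z = - cnj a / |a|\<close> turns \<open>\<rho>\<^sub>i\<^sub>j z\<close> into \<open>-|a|\<close>\<close>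
  define z where "z = - cnj a / cmod a"
  have a_cnj: "a * cnj a = cmod a * cmod a"
    by (simp add: complex_norm_square[symmetric] power2_eq_square)
  have az: "a * z = - cmod a" and zz: "cnj z * z = 1"
    using False unfolding a_def[symmetric] z_def by (simp_all add: a_cnj field_simps)
  have za: "cnj z * cnj a = - cmod a"
    using az by (metis complex_cnj_complex_of_real complex_cnj_minus complex_cnj_mult mult.commute)
  define v :: "nat \<Rightarrow> complex" where "v = (\<lambda>k. if k = i then 1 else if k = j then z else 0)"
  have "(\<Sum>k<N. \<Sum>l<N. cnj (v k) * \<rho> k l * v l) = \<rho> i i + a * z + cnj z * (cnj a + \<rho> j j * z)"
    using quadratic_form_two_point[OF i j ij, where A = \<rho> and z = z]
    unfolding v_def a_def density_cnj_entry[OF d, of i j, symmetric] .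
  also have "\<dots> = \<rho> i i + \<rho> j j - 2 * cmod a"
    by (simp add: distrib_left az za mult.left_commute[of "cnj z"] zz)
  finally have "0 \<le> Re (\<rho> i i + \<rho> j j - 2 * cmod a)"
    using density_quadratic_form_nonneg[OF d, of v] by simp
  then show ?thesis
    by (simp add: a_def)
qed

lemma density_entry_le_one:
  assumes d: "density N \<rho>" and i: "i < N" and j: "j < N"
  shows "cmod (\<rho> i j) \<le> 1"
proof (cases "i = j")
  case True
  have "Im (\<rho> i i) = 0"
    using density_cnj_entry[OF d, of i i] by (metis cnj.sel(2) neg_equal_zero)
  then have "cmod (\<rho> i i) = Re (\<rho> i i)"
    using density_diag_nonneg[OF d i] by (simp add: cmod_def)
  then show ?thesis
    using True density_diag_le_one[OF d i] by simp
next
  case False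
  then show ?thesis
    using density_offdiag_le[OF d i j] density_diag_le_one[OF d i] density_diag_le_one[OF d j] by simp
qed

lemma hs_norm_density_le: "density N \<rho> \<Longrightarrow> hs_norm N \<rho> \<le> N"
proof -
  assume d: "density N \<rho>"
  have "hs_norm N \<rho> \<le> sqrt (\<Sum>i<N. \<Sum>j<N. 1)"
    unfolding hs_norm_def
    by (intro real_sqrt_le_mono sum_mono) (simp add: density_entry_le_one[OF d] power_le_one)
  then show ?thesis
    by simp
qed

lemma hs_norm_density_diff_le:
  "density N \<rho> \<Longrightarrow> density N \<sigma> \<Longrightarrow> hs_norm N (\<lambda>i j. \<rho> i j - \<sigma> i j) \<le> 2 * N"
  using hs_norm_diff_le[of N \<rho> \<sigma>] hs_norm_density_le[of N \<rho>] hs_norm_density_le[of N \<sigma>] by simp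

lemma ex_density: "N \<ge> 1 \<Longrightarrow> \<exists>\<rho>. density N \<rho>"
proof
  assume N: "N \<ge> 1"
  define \<rho> :: cmat where "\<rho> = (\<lambda>i j. if i = 0 then if j = 0 then 1 else 0 else 0)"
  have "(\<Sum>a<N. \<Sum>b<N. cnj (v a) * \<rho> a b * v b) = cnj (v 0) * v 0" for v
    using N
    by (simp add: \<rho>_def sum.delta sum.If_cases if_distrib[where f = "\<lambda>x. x * _"]
        if_distrib[where f = "\<lambda>x. _ * x"] cong: if_cong)
  moreover have "0 \<le> Re (cnj (v 0) * v 0)" for v :: "nat \<Rightarrow> complex"
    by simp
  ultimately show "density N \<rho>"
    using N unfolding density_def psd_def hermitian_def sq_mat_def madj_def mtrace_def
    by (auto simp: \<rho>_def fun_eq_iff)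
qed

section \<open>Completely positive trace preserving maps\<close>

lemma cptp_sq_mat: "cptp N \<Phi> \<Longrightarrow> sq_mat N A \<Longrightarrow> sq_mat N (\<Phi> A)"
  unfolding cptp_def by blast

lemma cptp_add:
  "cptp N \<Phi> \<Longrightarrow> sq_mat N A \<Longrightarrow> sq_mat N B \<Longrightarrow> \<Phi> (\<lambda>i j. A i j + B i j) = (\<lambda>i j. \<Phi> A i j + \<Phi> B i j)"
  unfolding cptp_def by blast

lemma cptp_mult_left: "cptp N \<Phi> \<Longrightarrow> sq_mat N A \<Longrightarrow> \<Phi> (\<lambda>i j. c * A i j) = (\<lambda>i j. c * \<Phi> A i j)"
  unfolding cptp_def by blast

lemma cptp_zero: "cptp N \<Phi> \<Longrightarrow> \<Phi> (\<lambda>i j. 0) = (\<lambda>i j. 0)"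
  using cptp_mult_left[of N \<Phi> "\<lambda>i j. 0" 0] sq_mat_zero[of N] by simp

lemma cptp_diff:
  assumes c: "cptp N \<Phi>" and A: "sq_mat N A" and B: "sq_mat N B"
  shows "\<Phi> (\<lambda>i j. A i j - B i j) = (\<lambda>i j. \<Phi> A i j - \<Phi> B i j)"
proof -
  have "\<Phi> (\<lambda>i j. A i j - B i j) = \<Phi> (\<lambda>i j. A i j + (\<lambda>i j. (-1) * B i j) i j)"
    by simp
  also have "\<dots> = (\<lambda>i j. \<Phi> A i j + \<Phi> (\<lambda>i j. (-1) * B i j) i j)"
    by (rule cptp_add[OF c A sq_mat_mult_left[OF B]])
  finally show ?thesis
    using cptp_mult_left[OF c B, of "-1"] by simp
qed

lemma cptp_sum:
  assumes c: "cptp N \<Phi>"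
  shows "finite P \<Longrightarrow> (\<And>p. p \<in> P \<Longrightarrow> sq_mat N (M p)) \<Longrightarrow>
    \<Phi> (\<lambda>i j. \<Sum>p\<in>P. M p i j) = (\<lambda>i j. \<Sum>p\<in>P. \<Phi> (M p) i j)"
proof (induction P rule: finite_induct)
  case empty
  then show ?case
    using cptp_zero[OF c] by simp
next
  case (insert p P)
  have "\<Phi> (\<lambda>i j. \<Sum>p\<in>insert p P. M p i j) = \<Phi> (\<lambda>i j. M p i j + (\<lambda>i j. \<Sum>p\<in>P. M p i j) i j)"
    using insert by simp
  also have "\<dots> = (\<lambda>i j. \<Phi> (M p) i j + \<Phi> (\<lambda>i j. \<Sum>p\<in>P. M p i j) i j)"
    by (rule cptp_add[OF c]) (use insert in \<open>auto intro!: sq_mat_sum\<close>)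
  finally show ?case
    using insert by simp
qed

lemma cptp_hs_bounded:
  assumes c: "cptp N \<Phi>"
  obtains K where "\<And>A. sq_mat N A \<Longrightarrow> hs_norm N (\<Phi> A) \<le> K * hs_norm N A"
proof -
  define P where "P = {..<N} \<times> {..<N}"
  have "hs_norm N (\<Phi> A) \<le> (\<Sum>p\<in>P. hs_norm N (\<Phi> (mat_unit p))) * hs_norm N A" if A: "sq_mat N A" for A
  proof -
    have "\<Phi> A = \<Phi> (\<lambda>i j. \<Sum>p\<in>P. (\<lambda>i j. A (fst p) (snd p) * mat_unit p i j) i j)"
      using sq_mat_expansion[OF A] unfolding P_def by simp
    also have "\<dots> = (\<lambda>i j. \<Sum>p\<in>P. \<Phi> (\<lambda>i j. A (fst p) (snd p) * mat_unit p i j) i j)"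
      by (rule cptp_sum[OF c]) (auto simp: P_def intro!: sq_mat_mult_left sq_mat_mat_unit)
    also have "\<dots> = (\<lambda>i j. \<Sum>p\<in>P. A (fst p) (snd p) * \<Phi> (mat_unit p) i j)"
      by (intro ext sum.cong refl) (simp add: cptp_mult_left[OF c sq_mat_mat_unit] P_def)
    finally have "hs_norm N (\<Phi> A) \<le> (\<Sum>p\<in>P. hs_norm N (\<lambda>i j. A (fst p) (snd p) * \<Phi> (mat_unit p) i j))"
      by (simp only: hs_norm_sum_le)
    also have "\<dots> \<le> (\<Sum>p\<in>P. hs_norm N A * hs_norm N (\<Phi> (mat_unit p)))"
      unfolding hs_norm_mult_left
      by (intro sum_mono mult_right_mono hs_norm_nonneg) (auto simp: P_def intro!: norm_entry_le_hs_norm)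
    finally show ?thesis
      by (simp add: sum_distrib_left mult.commute)
  qed
  then show ?thesis
    using that by blast
qed

text \<open>The bound \<open>K\<close> only serves to make the real supremum defining \<open>op22\<close> meaningful.\<close>

lemma hs_norm_le_op22:
  assumes hom: "\<And>c A. sq_mat N A \<Longrightarrow> S (\<lambda>i j. c * A i j) = (\<lambda>i j. c * S A i j)"
    and bounded: "\<And>A. sq_mat N A \<Longrightarrow> hs_norm N (S A) \<le> K * hs_norm N A"
    and A: "sq_mat N A"
  shows "hs_norm N (S A) \<le> op22 N S * hs_norm N A"
proof (cases "A = (\<lambda>i j. 0)")
  case True
  then show ?thesis
    using hom[OF sq_mat_zero, of 0] by simp
next
  case False
  have pos: "0 < hs_norm N A"
    by (rule hs_norm_pos[OF A False])
  define c where "c = complex_of_real (1 / hs_norm N A)"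
  have bdd: "bdd_above {hs_norm N (S B) | B. sq_mat N B \<and> hs_norm N B = 1}"
  proof (rule bdd_aboveI)
    fix y assume "y \<in> {hs_norm N (S B) | B. sq_mat N B \<and> hs_norm N B = 1}"
    then show "y \<le> K"
      using bounded by force
  qed
  have "hs_norm N (\<lambda>i j. c * A i j) = 1"
    unfolding hs_norm_mult_left c_def using pos by (simp add: norm_divide)
  then have "hs_norm N (S (\<lambda>i j. c * A i j)) \<in> {hs_norm N (S B) | B. sq_mat N B \<and> hs_norm N B = 1}"
    using sq_mat_mult_left[OF A] by blast
  then have "hs_norm N (S (\<lambda>i j. c * A i j)) \<le> op22 N S"
    unfolding op22_def by (rule cSup_upper[OF _ bdd])
  then have "hs_norm N (S A) / hs_norm N A \<le> op22 N S"
    unfolding hom[OF A] hs_norm_mult_left c_def using pos by (simp add: norm_divide)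
  then show ?thesis
    using pos by (simp add: divide_le_eq)
qed

lemma cptp_diff_le_op22:
  assumes c\<^sub>1: "cptp N \<Phi>\<^sub>1" and c\<^sub>2: "cptp N \<Phi>\<^sub>2" and A: "sq_mat N A"
  shows "hs_norm N (\<lambda>i j. \<Phi>\<^sub>1 A i j - \<Phi>\<^sub>2 A i j)
    \<le> op22 N (\<lambda>A i j. \<Phi>\<^sub>1 A i j - \<Phi>\<^sub>2 A i j) * hs_norm N A"
proof -
  obtain K\<^sub>1 K\<^sub>2 where
    K\<^sub>1: "\<And>A. sq_mat N A \<Longrightarrow> hs_norm N (\<Phi>\<^sub>1 A) \<le> K\<^sub>1 * hs_norm N A" and
    K\<^sub>2: "\<And>A. sq_mat N A \<Longrightarrow> hs_norm N (\<Phi>\<^sub>2 A) \<le> K\<^sub>2 * hs_norm N A"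
    using cptp_hs_bounded[OF c\<^sub>1] cptp_hs_bounded[OF c\<^sub>2] by metis
  show ?thesis
  proof (rule hs_norm_le_op22[OF _ _ A])
    show "hs_norm N (\<lambda>i j. \<Phi>\<^sub>1 B i j - \<Phi>\<^sub>2 B i j) \<le> (K\<^sub>1 + K\<^sub>2) * hs_norm N B"
      if "sq_mat N B" for B
      using hs_norm_diff_le[of N "\<Phi>\<^sub>1 B" "\<Phi>\<^sub>2 B"] K\<^sub>1[OF that] K\<^sub>2[OF that]
      by (simp add: distrib_right)
  qed (simp add: cptp_mult_left[OF c\<^sub>1] cptp_mult_left[OF c\<^sub>2] right_diff_distrib)
qed

lemma block_apply_one: "sq_mat N \<rho> \<Longrightarrow> sq_mat N (\<Phi> \<rho>) \<Longrightarrow> block_apply N 1 \<Phi> \<rho> = \<Phi> \<rho>"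
proof (intro ext)
  fix i j assume \<rho>: "sq_mat N \<rho>" and \<Phi>\<rho>: "sq_mat N (\<Phi> \<rho>)"
  have "(\<lambda>p q. if p < N \<and> q < N then \<rho> (i div N * N + p) (j div N * N + q) else 0) = \<rho>"
    if "i < N" "j < N"
    using that \<rho> unfolding sq_mat_def by (auto intro!: ext)
  then show "block_apply N 1 \<Phi> \<rho> i j = \<Phi> \<rho> i j"
    unfolding block_apply_def using \<Phi>\<rho> unfolding sq_mat_def by auto
qed

lemma cptp_density:
  assumes c: "cptp N \<Phi>" and d: "density N \<rho>"
  shows "density N (\<Phi> \<rho>)"
proof -
  have "psd (1 * N) \<rho>"
    using d by (simp add: density_def)
  then have "psd (1 * N) (block_apply N 1 \<Phi> \<rho>)"
    using c unfolding cptp_def by blast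
  then have "psd N (\<Phi> \<rho>)"
    using block_apply_one[of N \<rho> \<Phi>] density_sq_mat[OF d] cptp_sq_mat[OF c] by simp
  moreover have "mtrace N (\<Phi> \<rho>) = 1"
    using c d density_sq_mat[OF d] unfolding cptp_def density_def by simp
  ultimately show ?thesis
    unfolding density_def by simp
qed

text \<open>The real supremum in \<open>wnorm\<close> bounds its terms only when they are bounded above,
  hence the bound \<open>C\<close>.\<close>

lemma wnorm_less_imp_close:
  assumes w: "null_sequence w" and bounded: "\<And>k. k \<le> 0 \<Longrightarrow> \<bar>d k\<bar> \<le> C"
    and "0 < \<delta>" and small: "wnorm w d < \<delta> * w M" and "l \<le> M"
  shows "\<bar>d (- int l)\<bar> < \<delta>"
proof -
  have w_pos: "\<And>k. 0 < w k" and w_le_one: "\<And>k. w k \<le> 1" and "decseq w"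
    using w unfolding null_sequence_def by auto
  have "bdd_above ((\<lambda>k. \<bar>d k\<bar> * w (nat (- k))) ` {..0})"
  proof (rule bdd_aboveI2)
    fix k :: int assume "k \<in> {..0}"
    then show "\<bar>d k\<bar> * w (nat (- k)) \<le> C"
      using bounded[of k] mult_left_mono[OF w_le_one, of "\<bar>d k\<bar>" "nat (- k)"] by simp
  qed
  then have "\<bar>d (- int l)\<bar> * w l \<le> wnorm w d"
    unfolding wnorm_def using cSUP_upper[of "- int l" "{..0}"] by fastforce
  also have "\<dots> < \<delta> * w M"
    by (rule small)
  also have "\<dots> \<le> \<delta> * w l"
    using \<open>decseq w\<close> \<open>l \<le> M\<close> \<open>0 < \<delta>\<close> by (simp add: decseq_def)
  finally show ?thesis
    using w_pos[of l] by simp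
qed

section \<open>Iterated channels\<close>

lemma propagate_Suc_outer: "propagate T u k (Suc m) \<rho> = T (u k) (propagate T u (k - 1) m \<rho>)"
proof (induction m arbitrary: k \<rho>)
  case (Suc m)
  have "propagate T u k (Suc (Suc m)) \<rho> = propagate T u k (Suc m) (T (u (k - 1 - int (Suc m))) \<rho>)"
    by (simp add: algebra_simps)
  then show ?case
    using Suc by simp
qed simp

lemma propagate_add:
  "propagate T u k (m + Suc p) \<rho> = propagate T u k m (propagate T u (k - int (Suc m)) p \<rho>)"
proof (induction p arbitrary: \<rho>)
  case (Suc p)
  have "propagate T u k (m + Suc (Suc p)) \<rho>
      = propagate T u k (m + Suc p) (T (u (k - int (Suc m) - int (Suc p))) \<rho>)"
    by (simp add: algebra_simps)
  then show ?case
    using Suc by simp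
qed simp

locale contractive_channels =
  fixes N :: nat and T :: "real \<Rightarrow> cmat \<Rightarrow> cmat" and X :: "real set" and q :: real
  assumes dim_pos: "1 \<le> N"
    and cptp_channel: "\<And>x. x \<in> X \<Longrightarrow> cptp N (T x)"
    and q_nonneg: "0 \<le> q" and q_less_one: "q < 1"
    and contraction: "\<And>x A. x \<in> X \<Longrightarrow> hermitian N A \<Longrightarrow> mtrace N A = 0 \<Longrightarrow> A \<noteq> (\<lambda>i j. 0) \<Longrightarrow>
      hs_norm N (T x A) / hs_norm N A \<le> q"
begin

lemma channel_density: "x \<in> X \<Longrightarrow> density N \<rho> \<Longrightarrow> density N (T x \<rho>)"
  using cptp_density cptp_channel by blast

lemma channel_contraction:
  assumes x: "x \<in> X" and \<rho>: "density N \<rho>" and \<sigma>: "density N \<sigma>"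
  shows "hs_norm N (\<lambda>i j. T x \<rho> i j - T x \<sigma> i j) \<le> q * hs_norm N (\<lambda>i j. \<rho> i j - \<sigma> i j)"
proof -
  define A where "A = (\<lambda>i j. \<rho> i j - \<sigma> i j)"
  have c: "cptp N (T x)"
    by (rule cptp_channel[OF x])
  have A: "sq_mat N A"
    unfolding A_def by (rule sq_mat_diff[OF density_sq_mat[OF \<rho>] density_sq_mat[OF \<sigma>]])
  have "hs_norm N (T x A) \<le> q * hs_norm N A"
  proof (cases "A = (\<lambda>i j. 0)")
    case True
    then show ?thesis
      using cptp_zero[OF c] by simp
  next
    case False
    have "hermitian N A"
      unfolding hermitian_def using A
      by (simp add: fun_eq_iff madj_def A_def density_cnj_entry[OF \<rho>] density_cnj_entry[OF \<sigma>])
    moreover have "mtrace N A = 0"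
      using \<rho> \<sigma> by (simp add: A_def mtrace_def density_def sum_subtractf)
    ultimately show ?thesis
      using contraction[OF x _ _ False] hs_norm_pos[OF A False] by (simp add: divide_le_eq)
  qed
  moreover have "T x A = (\<lambda>i j. T x \<rho> i j - T x \<sigma> i j)"
    unfolding A_def by (rule cptp_diff[OF c density_sq_mat[OF \<rho>] density_sq_mat[OF \<sigma>]])
  ultimately show ?thesis
    by (simp add: A_def)
qed

lemma propagate_density:
  assumes u: "\<forall>k\<le>0. u k \<in> X" and "k \<le> 0" and "density N \<rho>"
  shows "density N (propagate T u k m \<rho>)"
  using assms(2,3) by (induction m arbitrary: \<rho>) (simp_all add: u channel_density)

lemma propagate_contraction:
  assumes u: "\<forall>k\<le>0. u k \<in> X" and k: "k \<le> 0" and "density N \<rho>" and "density N \<sigma>"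
  shows "hs_norm N (\<lambda>i j. propagate T u k m \<rho> i j - propagate T u k m \<sigma> i j)
    \<le> q ^ Suc m * hs_norm N (\<lambda>i j. \<rho> i j - \<sigma> i j)"
  using assms(3,4)
proof (induction m arbitrary: \<rho> \<sigma>)
  case 0
  then show ?case
    using u k channel_contraction by simp
next
  case (Suc m)
  define x where "x = u (k - int (Suc m))"
  have x: "x \<in> X"
    using u k by (simp add: x_def)
  have "hs_norm N (\<lambda>i j. propagate T u k m (T x \<rho>) i j - propagate T u k m (T x \<sigma>) i j)
      \<le> q ^ Suc m * hs_norm N (\<lambda>i j. T x \<rho> i j - T x \<sigma> i j)"
    using Suc channel_density[OF x] by blast
  also have "\<dots> \<le> q ^ Suc m * (q * hs_norm N (\<lambda>i j. \<rho> i j - \<sigma> i j))"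
    using channel_contraction[OF x Suc.prems] q_nonneg by (simp add: mult_left_mono)
  finally show ?case
    by (simp add: x_def mult_ac)
qed

lemma propagate_factor:
  assumes u: "\<forall>k\<le>0. u k \<in> X" and k: "k \<le> 0" and "M \<le> m" and \<rho>: "density N \<rho>"
  obtains \<rho>' where "density N \<rho>'" and "propagate T u k m \<rho> = propagate T u k M \<rho>'"
proof (cases "m = M")
  case False
  with \<open>M \<le> m\<close> obtain p where "m = M + Suc p"
    using less_imp_Suc_add[of M m] by auto
  then have "propagate T u k m \<rho> = propagate T u k M (propagate T u (k - int (Suc M)) p \<rho>)"
    by (simp only: propagate_add)
  moreover have "density N (propagate T u (k - int (Suc M)) p \<rho>)"
    using propagate_density[OF u _ \<rho>] k by simp
  ultimately show ?thesis
    using that by blast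
qed (use that \<rho> in blast)

lemma propagate_tail_le:
  assumes u: "\<forall>k\<le>0. u k \<in> X" and k: "k \<le> 0" and "M \<le> m"
    and \<rho>: "density N \<rho>" and \<sigma>: "density N \<sigma>"
  shows "hs_norm N (\<lambda>i j. propagate T u k m \<rho> i j - propagate T u k M \<sigma> i j) \<le> 2 * N * q ^ Suc M"
proof -
  obtain \<rho>' where \<rho>': "density N \<rho>'" and eq: "propagate T u k m \<rho> = propagate T u k M \<rho>'"
    using propagate_factor[OF u k \<open>M \<le> m\<close> \<rho>] by blast
  have "hs_norm N (\<lambda>i j. propagate T u k M \<rho>' i j - propagate T u k M \<sigma> i j)
      \<le> q ^ Suc M * hs_norm N (\<lambda>i j. \<rho>' i j - \<sigma> i j)"
    by (rule propagate_contraction[OF u k \<rho>' \<sigma>])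
  also have "\<dots> \<le> q ^ Suc M * (2 * N)"
    using hs_norm_density_diff_le[OF \<rho>' \<sigma>] q_nonneg by (simp add: mult_left_mono)
  finally show ?thesis
    by (simp add: eq mult_ac)
qed

lemma ex_tail_bound_less:
  assumes "0 < r"
  obtains M where "2 * N * q ^ Suc M < r"
proof -
  have "0 < r / (2 * N)"
    using assms dim_pos by simp
  then obtain M where M: "q ^ M < r / (2 * N)"
    using real_arch_pow_inv[OF _ q_less_one] by blast
  have "2 * N * q ^ Suc M \<le> 2 * N * q ^ M"
    using power_decreasing[of M "Suc M" q] q_nonneg q_less_one by (intro mult_left_mono) simp_all
  also have "\<dots> < r"
    using M dim_pos by (simp add: field_simps)
  finally have "2 * N * q ^ Suc M < r" .
  then show ?thesis
    using that by blast
qed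

text \<open>The errors made in the last \<open>m + 1\<close> steps are damped geometrically, so they add up to at
  most \<open>\<eta> (1 + q + q\<^sup>2 + \<dots>)\<close>.\<close>

lemma propagate_perturbation:
  assumes u: "\<forall>k\<le>0. u k \<in> X" and v: "\<forall>k\<le>0. v k \<in> X" and "k \<le> 0" and \<rho>: "density N \<rho>"
    and "\<And>l B. l \<le> m \<Longrightarrow> density N B \<Longrightarrow>
      hs_norm N (\<lambda>i j. T (u (k - int l)) B i j - T (v (k - int l)) B i j) \<le> \<eta>"
  shows "hs_norm N (\<lambda>i j. propagate T u k m \<rho> i j - propagate T v k m \<rho> i j) \<le> \<eta> / (1 - q)"
  using assms(3,5)
proof (induction m arbitrary: k)
  case 0
  have close: "hs_norm N (\<lambda>i j. T (u k) \<rho> i j - T (v k) \<rho> i j) \<le> \<eta>"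
    using "0.prems"(2)[of 0 \<rho>] \<rho> by simp
  then have "0 \<le> \<eta>"
    using hs_norm_nonneg order_trans by blast
  then have "\<eta> \<le> \<eta> / (1 - q)"
    using divide_left_mono[of "1 - q" 1 \<eta>] q_nonneg q_less_one by simp
  with close show ?case
    by simp
next
  case (Suc m)
  define A where "A = propagate T u (k - 1) m \<rho>"
  define B where "B = propagate T v (k - 1) m \<rho>"
  have A: "density N A" and B: "density N B"
    unfolding A_def B_def using Suc.prems propagate_density u v \<rho> by simp_all
  have uk: "u k \<in> X"
    using u Suc.prems by simp
  have IH: "hs_norm N (\<lambda>i j. A i j - B i j) \<le> \<eta> / (1 - q)"
    unfolding A_def B_def
  proof (rule Suc.IH)
    show "hs_norm N (\<lambda>i j. T (u (k - 1 - int l)) B i j - T (v (k - 1 - int l)) B i j) \<le> \<eta>"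
      if "l \<le> m" "density N B" for l B
      using Suc.prems(2)[of "Suc l" B] that by (simp add: algebra_simps)
  qed (use Suc.prems in simp)
  have "hs_norm N (\<lambda>i j. propagate T u k (Suc m) \<rho> i j - propagate T v k (Suc m) \<rho> i j)
      \<le> hs_norm N (\<lambda>i j. T (u k) A i j - T (u k) B i j) + hs_norm N (\<lambda>i j. T (u k) B i j - T (v k) B i j)"
    unfolding propagate_Suc_outer A_def B_def by (rule hs_norm_diff_triangle)
  also have "\<dots> \<le> q * (\<eta> / (1 - q)) + \<eta>"
  proof (rule add_mono)
    show "hs_norm N (\<lambda>i j. T (u k) A i j - T (u k) B i j) \<le> q * (\<eta> / (1 - q))"
      using channel_contraction[OF uk A B] mult_left_mono[OF IH q_nonneg] by linarith
    show "hs_norm N (\<lambda>i j. T (u k) B i j - T (v k) B i j) \<le> \<eta>"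
      using Suc.prems(2)[of 0 B] B by simp
  qed
  also have "\<dots> = \<eta> / (1 - q)"
    using q_less_one by (simp add: field_simps)
  finally show ?case .
qed

section \<open>The limit state\<close>

lemma propagate_entry_convergent:
  assumes u: "\<forall>k\<le>0. u k \<in> X" and \<rho>: "density N \<rho>" and i: "i < N" and j: "j < N"
  shows "convergent (\<lambda>m. propagate T u 0 m \<rho> i j)"
proof -
  have "\<exists>M. \<forall>m\<ge>M. cmod (propagate T u 0 m \<rho> i j - propagate T u 0 M \<rho> i j) < e" if "0 < e" for e
  proof -
    obtain M where M: "2 * N * q ^ Suc M < e"
      using ex_tail_bound_less[OF \<open>0 < e\<close>] by blast
    have "cmod (propagate T u 0 m \<rho> i j - propagate T u 0 M \<rho> i j) < e" if "M \<le> m" for m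
      using norm_entry_le_hs_norm[OF i j] propagate_tail_le[OF u order_refl that \<rho> \<rho>] M
      by (meson le_less_trans order_trans)
    then show ?thesis
      by blast
  qed
  then have "Cauchy (\<lambda>m. propagate T u 0 m \<rho> i j)"
    unfolding Cauchy_altdef2 dist_norm by blast
  then show ?thesis
    by (simp add: Cauchy_convergent_iff)
qed

lemma propagate_entry_tendsto_lim:
  assumes u: "\<forall>k\<le>0. u k \<in> X" and \<rho>s: "\<And>m. density N (\<rho>s m)" and \<rho>: "density N \<rho>"
    and i: "i < N" and j: "j < N"
  shows "(\<lambda>m. propagate T u 0 m (\<rho>s m) i j) \<longlonglongrightarrow> lim (\<lambda>m. propagate T u 0 m \<rho> i j)"
proof -
  have "(\<lambda>m. propagate T u 0 m \<rho> i j) \<longlonglongrightarrow> lim (\<lambda>m. propagate T u 0 m \<rho> i j)"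
    using propagate_entry_convergent[OF u \<rho> i j] by (simp add: convergent_LIMSEQ_iff)
  moreover have "(\<lambda>m. propagate T u 0 m (\<rho>s m) i j - propagate T u 0 m \<rho> i j) \<longlonglongrightarrow> 0"
  proof (rule Lim_null_comparison)
    show "\<forall>\<^sub>F m in sequentially.
        norm (propagate T u 0 m (\<rho>s m) i j - propagate T u 0 m \<rho> i j) \<le> 2 * N * q ^ Suc m"
      using order_trans[OF norm_entry_le_hs_norm[OF i j] propagate_tail_le[OF u order_refl order_refl \<rho>s \<rho>]]
      by simp
    show "(\<lambda>m. 2 * N * q ^ Suc m) \<longlonglongrightarrow> 0"
      using q_nonneg q_less_one by (intro tendsto_mult_right_zero LIMSEQ_Suc LIMSEQ_power_zero) simp
  qed
  ultimately show ?thesis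
    using tendsto_add by fastforce
qed

lemma limit_state_tendsto:
  assumes u: "\<forall>k\<le>0. u k \<in> X" and \<rho>s: "\<And>m. density N (\<rho>s m)" and i: "i < N" and j: "j < N"
  shows "(\<lambda>m. propagate T u 0 m (\<rho>s m) i j) \<longlonglongrightarrow> limit_state N T u 0 i j"
proof -
  obtain \<rho>\<^sub>0 where \<rho>\<^sub>0: "density N \<rho>\<^sub>0"
    using ex_density dim_pos by blast
  define \<sigma> where "\<sigma> = (\<lambda>i j. if i < N \<and> j < N then lim (\<lambda>m. propagate T u 0 m \<rho>\<^sub>0 i j) else 0)"
  have \<sigma>_tendsto: "(\<lambda>m. propagate T u 0 m (\<rho>s m) i j) \<longlonglongrightarrow> \<sigma> i j"
    if "\<And>m. density N (\<rho>s m)" and "i < N" and "j < N" for \<rho>s i j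
    using propagate_entry_tendsto_lim[OF u that(1) \<rho>\<^sub>0 that(2,3)] that(2,3) by (simp add: \<sigma>_def)
  have "limit_state N T u 0 = \<sigma>"
    unfolding limit_state_def
  proof (rule the_equality)
    show "sq_mat N \<sigma> \<and> (\<forall>\<rho>s. (\<forall>m. density N (\<rho>s m)) \<longrightarrow> mat_lim N (\<lambda>m. propagate T u 0 m (\<rho>s m)) \<sigma>)"
      using \<sigma>_tendsto unfolding mat_lim_def sq_mat_def \<sigma>_def by auto
  next
    fix \<tau> assume \<tau>: "sq_mat N \<tau> \<and> (\<forall>\<rho>s. (\<forall>m. density N (\<rho>s m)) \<longrightarrow> mat_lim N (\<lambda>m. propagate T u 0 m (\<rho>s m)) \<tau>)"
    show "\<tau> = \<sigma>"
    proof (intro ext)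
      fix i j
      show "\<tau> i j = \<sigma> i j"
      proof (cases "i < N \<and> j < N")
        case True
        then have "(\<lambda>m. propagate T u 0 m \<rho>\<^sub>0 i j) \<longlonglongrightarrow> \<tau> i j"
          using \<tau>[THEN conjunct2, rule_format, of "\<lambda>_. \<rho>\<^sub>0"] \<rho>\<^sub>0 True unfolding mat_lim_def by simp
        moreover have "(\<lambda>m. propagate T u 0 m \<rho>\<^sub>0 i j) \<longlonglongrightarrow> \<sigma> i j"
          using \<sigma>_tendsto[of "\<lambda>_. \<rho>\<^sub>0" i j] \<rho>\<^sub>0 True by blast
        ultimately show ?thesis
          by (rule LIMSEQ_unique)
      next
        case False
        then show ?thesis
          using \<tau> unfolding sq_mat_def \<sigma>_def by auto
      qed
    qed
  qed
  then show ?thesis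
    using \<sigma>_tendsto[OF \<rho>s i j] by simp
qed

lemma limit_state_diff_le:
  assumes u: "\<forall>k\<le>0. u k \<in> X" and v: "\<forall>k\<le>0. v k \<in> X"
    and close: "\<And>l B. l \<le> M \<Longrightarrow> density N B \<Longrightarrow>
      hs_norm N (\<lambda>i j. T (u (- int l)) B i j - T (v (- int l)) B i j) \<le> \<eta>"
    and i: "i < N" and j: "j < N"
  shows "cmod (limit_state N T u 0 i j - limit_state N T v 0 i j) \<le> \<eta> / (1 - q) + 2 * N * q ^ Suc M"
proof -
  obtain \<rho> where \<rho>: "density N \<rho>"
    using ex_density dim_pos by blast
  have "(\<lambda>m. cmod (propagate T u 0 m \<rho> i j - propagate T v 0 m \<rho> i j))
      \<longlonglongrightarrow> cmod (limit_state N T u 0 i j - limit_state N T v 0 i j)"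
    using limit_state_tendsto[OF u, where \<rho>s = "\<lambda>_. \<rho>"] limit_state_tendsto[OF v, where \<rho>s = "\<lambda>_. \<rho>"] \<rho> i j
    by (intro tendsto_intros) auto
  moreover have "cmod (propagate T u 0 m \<rho> i j - propagate T v 0 m \<rho> i j) \<le> \<eta> / (1 - q) + 2 * N * q ^ Suc M"
    if "M \<le> m" for m
  proof -
    obtain \<rho>' where \<rho>': "density N \<rho>'" and eq: "propagate T v 0 m \<rho> = propagate T v 0 M \<rho>'"
      using propagate_factor[OF v order_refl \<open>M \<le> m\<close> \<rho>] by blast
    have "cmod (propagate T u 0 m \<rho> i j - propagate T v 0 m \<rho> i j)
        \<le> hs_norm N (\<lambda>i j. propagate T u 0 m \<rho> i j - propagate T v 0 M \<rho>' i j)"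
      unfolding eq by (rule norm_entry_le_hs_norm[OF i j])
    also have "\<dots> \<le> hs_norm N (\<lambda>i j. propagate T u 0 m \<rho> i j - propagate T u 0 M \<rho>' i j)
        + hs_norm N (\<lambda>i j. propagate T u 0 M \<rho>' i j - propagate T v 0 M \<rho>' i j)"
      by (rule hs_norm_diff_triangle)
    also have "\<dots> \<le> 2 * N * q ^ Suc M + \<eta> / (1 - q)"
      using close
      by (intro add_mono propagate_tail_le[OF u order_refl that \<rho> \<rho>'] propagate_perturbation[OF u v order_refl \<rho>'])
        simp_all
    finally show ?thesis
      by simp
  qed
  ultimately show ?thesis
    by (intro LIMSEQ_le_const2) auto
qed

lemma channel_diff_le:
  assumes "x \<in> X" and "y \<in> X" and "op22 N (\<lambda>A i j. T x A i j - T y A i j) < e" and "0 \<le> e"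
    and B: "density N B"
  shows "hs_norm N (\<lambda>i j. T x B i j - T y B i j) \<le> e * N"
proof -
  have "hs_norm N (\<lambda>i j. T x B i j - T y B i j) \<le> op22 N (\<lambda>A i j. T x A i j - T y A i j) * hs_norm N B"
    using cptp_diff_le_op22 cptp_channel assms(1,2) density_sq_mat[OF B] by blast
  also have "\<dots> \<le> e * hs_norm N B"
    using assms(3) hs_norm_nonneg by (intro mult_right_mono) auto
  also have "\<dots> \<le> e * N"
    using hs_norm_density_le[OF B] \<open>0 \<le> e\<close> by (rule mult_left_mono)
  finally show ?thesis .
qed

lemma limit_state_continuous:
  assumes cont: "\<forall>e>0. \<exists>\<delta>>0. \<forall>x\<in>X. \<forall>y\<in>X. \<bar>x - y\<bar> < \<delta> \<longrightarrow> op22 N (\<lambda>A i j. T x A i j - T y A i j) < e"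
    and w: "null_sequence w" and X_bounded: "\<And>x. x \<in> X \<Longrightarrow> \<bar>x\<bar> \<le> L"
    and u: "\<forall>k\<le>0. u k \<in> X" and "0 < \<eta>"
  obtains d where "0 < d"
    and "\<And>v i j. \<forall>k\<le>0. v k \<in> X \<Longrightarrow> wnorm w (\<lambda>k. u k - v k) < d \<Longrightarrow> i < N \<Longrightarrow> j < N \<Longrightarrow>
      cmod (limit_state N T u 0 i j - limit_state N T v 0 i j) \<le> \<eta>"
proof -
  define e where "e = \<eta> * (1 - q) / (2 * N)"
  have "0 < e"
    using \<open>0 < \<eta>\<close> q_less_one dim_pos by (simp add: e_def)
  then obtain \<delta> where "0 < \<delta>"
    and \<delta>: "\<And>x y. x \<in> X \<Longrightarrow> y \<in> X \<Longrightarrow> \<bar>x - y\<bar> < \<delta> \<Longrightarrow> op22 N (\<lambda>A i j. T x A i j - T y A i j) < e"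
    using cont by meson
  obtain M where M: "2 * N * q ^ Suc M < \<eta> / 2"
    using ex_tail_bound_less \<open>0 < \<eta>\<close> by (metis half_gt_zero)
  have "0 < w M"
    using w unfolding null_sequence_def by blast
  show ?thesis
  proof (rule that[of "\<delta> * w M"])
    show "0 < \<delta> * w M"
      using \<open>0 < \<delta>\<close> \<open>0 < w M\<close> by simp
    fix v i j
    assume v: "\<forall>k\<le>0. v k \<in> X" and small: "wnorm w (\<lambda>k. u k - v k) < \<delta> * w M"
      and i: "i < N" and j: "j < N"
    have diff_bounded: "\<bar>u k - v k\<bar> \<le> 2 * L" if "k \<le> 0" for k
      using X_bounded[of "u k"] X_bounded[of "v k"] u v that by fastforce
    have "\<bar>u (- int l) - v (- int l)\<bar> < \<delta>" if "l \<le> M" for l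
      using wnorm_less_imp_close[OF w diff_bounded \<open>0 < \<delta>\<close> small that] by simp
    then have "hs_norm N (\<lambda>i j. T (u (- int l)) B i j - T (v (- int l)) B i j) \<le> e * N"
      if "l \<le> M" and "density N B" for l B
      using channel_diff_le \<delta> u v \<open>0 < e\<close> that by simp
    then have "cmod (limit_state N T u 0 i j - limit_state N T v 0 i j) \<le> e * N / (1 - q) + 2 * N * q ^ Suc M"
      by (rule limit_state_diff_le[OF u v _ i j])
    also have "e * N / (1 - q) = \<eta> / 2"
      using q_less_one dim_pos by (simp add: e_def field_simps)
    finally show "cmod (limit_state N T u 0 i j - limit_state N T v 0 i j) \<le> \<eta>"
      using M by simp
  qed
qed

end

section \<open>Continuity of the output\<close>

lemma expZ_tendsto:
  assumes "\<And>a b. a < 2 ^ n \<Longrightarrow> b < 2 ^ n \<Longrightarrow> (\<lambda>k. S k a b) \<longlonglongrightarrow> \<sigma> a b"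
  shows "(\<lambda>k. expZ n (S k) i) \<longlonglongrightarrow> expZ n \<sigma> i"
  unfolding expZ_def mtrace_def mmult_def
  by (intro tendsto_Re tendsto_sum) (auto intro!: tendsto_sum tendsto_mult_right assms)

lemma hpoly_tendsto:
  assumes "\<And>a b. a < 2 ^ n \<Longrightarrow> b < 2 ^ n \<Longrightarrow> (\<lambda>k. S k a b) \<longlonglongrightarrow> \<sigma> a b"
  shows "(\<lambda>k. hpoly n R c (S k)) \<longlonglongrightarrow> hpoly n R c \<sigma>"
  unfolding hpoly_def
  by (intro tendsto_sum tendsto_mult_left tendsto_prod tendsto_power expZ_tendsto assms)

lemma entrywise_continuous_eps_delta:
  fixes F :: "cmat \<Rightarrow> real"
  assumes seq: "\<And>S. (\<And>a b. a < N \<Longrightarrow> b < N \<Longrightarrow> (\<lambda>k. S k a b) \<longlonglongrightarrow> \<sigma> a b) \<Longrightarrow> (\<lambda>k. F (S k)) \<longlonglongrightarrow> F \<sigma>"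
    and "0 < e"
  obtains r where "0 < r" and "\<And>\<tau>. (\<And>a b. a < N \<Longrightarrow> b < N \<Longrightarrow> cmod (\<tau> a b - \<sigma> a b) \<le> r) \<Longrightarrow> \<bar>F \<tau> - F \<sigma>\<bar> < e"
proof (rule ccontr)
  assume "\<not> thesis"
  have "\<exists>\<tau>. (\<forall>a<N. \<forall>b<N. cmod (\<tau> a b - \<sigma> a b) \<le> inverse (Suc k)) \<and> \<not> \<bar>F \<tau> - F \<sigma>\<bar> < e" for k :: nat
  proof (rule ccontr)
    assume "\<nexists>\<tau>. (\<forall>a<N. \<forall>b<N. cmod (\<tau> a b - \<sigma> a b) \<le> inverse (Suc k)) \<and> \<not> \<bar>F \<tau> - F \<sigma>\<bar> < e"
    then have "\<bar>F \<tau> - F \<sigma>\<bar> < e"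
      if "\<And>a b. a < N \<Longrightarrow> b < N \<Longrightarrow> cmod (\<tau> a b - \<sigma> a b) \<le> inverse (Suc k)" for \<tau>
      using that by blast
    then show False
      using that[of "inverse (Suc k)"] \<open>\<not> thesis\<close> by simp
  qed
  then obtain S where S: "\<And>k a b. a < N \<Longrightarrow> b < N \<Longrightarrow> cmod (S k a b - \<sigma> a b) \<le> inverse (Suc k)"
    and far: "\<And>k. \<not> \<bar>F (S k) - F \<sigma>\<bar> < e"
    by metis
  have "(\<lambda>k. S k a b) \<longlonglongrightarrow> \<sigma> a b" if "a < N" "b < N" for a b
  proof -
    have "(\<lambda>k. S k a b - \<sigma> a b) \<longlonglongrightarrow> 0"
      by (rule Lim_null_comparison[OF _ LIMSEQ_inverse_real_of_nat]) (use S that in simp)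
    then show ?thesis
      by (simp add: LIM_zero_iff)
  qed
  then have "(\<lambda>k. F (S k)) \<longlonglongrightarrow> F \<sigma>"
    by (rule seq)
  then obtain k where "\<bar>F (S k) - F \<sigma>\<bar> < e"
    using LIMSEQ_D[OF _ \<open>0 < e\<close>] by fastforce
  with far show False
    by blast
qed

theorem lemma3:
  fixes n R :: nat and L \<epsilon> :: real and D :: "real set"
    and c :: "(nat \<Rightarrow> nat) \<Rightarrow> real"
    and T :: "real \<Rightarrow> cmat \<Rightarrow> cmat"
    and w :: "nat \<Rightarrow> real"
  assumes "n \<ge> 1" and "L > 0" and "compact D"
    and cptp: "\<forall>x\<in>D \<inter> {-L..L}. cptp (2 ^ n) (T x)"
    and eps: "0 < \<epsilon>" "\<epsilon> \<le> 1"
    and contr: "\<forall>x\<in>D \<inter> {-L..L}. \<forall>A. hermitian (2 ^ n) A \<and> mtrace (2 ^ n) A = 0 \<and> A \<noteq> (\<lambda>i j. 0)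
                  \<longrightarrow> hs_norm (2 ^ n) (T x A) / hs_norm (2 ^ n) A \<le> 1 - \<epsilon>"
    and cont: "\<forall>\<epsilon>'>0. \<exists>\<delta>>0. \<forall>x\<in>D \<inter> {-L..L}. \<forall>y\<in>D \<inter> {-L..L}. \<bar>x - y\<bar> < \<delta> \<longrightarrow>
                  op22 (2 ^ n) (\<lambda>A i j. T x A i j - T y A i j) < \<epsilon>'"
    and "null_sequence w"
  shows "w_fading_memory w L D (functionalF n R c T)"
proof -
  interpret contractive_channels "2 ^ n" T "D \<inter> {-L..L}" "1 - \<epsilon>"
    using cptp eps contr by unfold_locales auto
  have X_bounded: "\<And>x. x \<in> D \<inter> {-L..L} \<Longrightarrow> \<bar>x\<bar> \<le> L"
    by auto
  have admissible: "\<forall>k\<le>0. u k \<in> D \<inter> {-L..L}" if "u \<in> KLminus L D" for u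
    using that unfolding KLminus_def by blast
  show ?thesis
    unfolding w_fading_memory_def functionalF_def filterM_def
  proof (intro ballI allI impI)
    fix u and e :: real assume u: "u \<in> KLminus L D" and "0 < e"
    let ?\<sigma> = "\<lambda>v. limit_state (2 ^ n) T v 0"
    obtain r where "0 < r" and r: "\<And>\<tau>. (\<And>a b. a < 2 ^ n \<Longrightarrow> b < 2 ^ n \<Longrightarrow> cmod (\<tau> a b - ?\<sigma> u a b) \<le> r) \<Longrightarrow>
        \<bar>hpoly n R c \<tau> - hpoly n R c (?\<sigma> u)\<bar> < e"
      using entrywise_continuous_eps_delta[where F = "hpoly n R c" and \<sigma> = "?\<sigma> u", OF hpoly_tendsto \<open>0 < e\<close>]
      by blast
    obtain d where "0 < d" and d: "\<And>v a b. \<forall>k\<le>0. v k \<in> D \<inter> {-L..L} \<Longrightarrow> wnorm w (\<lambda>k. u k - v k) < d \<Longrightarrow>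
        a < 2 ^ n \<Longrightarrow> b < 2 ^ n \<Longrightarrow> cmod (?\<sigma> u a b - ?\<sigma> v a b) \<le> r"
      using limit_state_continuous[OF cont \<open>null_sequence w\<close> X_bounded admissible[OF u] \<open>0 < r\<close>]
      by blast
    have "\<bar>hpoly n R c (?\<sigma> u) - hpoly n R c (?\<sigma> v)\<bar> < e"
      if "v \<in> KLminus L D" and "wnorm w (\<lambda>k. u k - v k) < d" for v
      using r[of "?\<sigma> v"] d[OF admissible[OF that(1)] that(2)] by (simp add: abs_minus_commute norm_minus_commute)
    with \<open>0 < d\<close> show "\<exists>d>0. \<forall>v\<in>KLminus L D. wnorm w (\<lambda>k. u k - v k) < d \<longrightarrow>
        \<bar>hpoly n R c (?\<sigma> u) - hpoly n R c (?\<sigma> v)\<bar> < e"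
      by blast
  qed
qed

end
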